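(* Let $H=(T_1,\dots,T_n,p_1,\dots,p_n)$ be a strategic game equipped with mixed strategies as described in the context. (i) If $\mathbf{MD}(\beta)$ holds for all $\beta<\alpha$, then $\overline{MGS}^{\alpha}=\overline{MLS}^{\alpha}$. In particular, if $\mathbf{MD}(\alpha)$ holds for all ordinals $\alpha$, then the outcomes of $\overline{MGS}$ and $\overline{MLS}$ coincide. (ii) If $\mathbf{MD}(\alpha)$ holds for all ordinals $\alpha$, then $\overline{MLS}$ is order independent. (iii) If $\mathbf{MD}(\beta)$ holds for all $\beta<\alpha+1$, then $MLS^{\alpha}=\overline{MLS}^{\alpha}$. In particular, if $\mathbf{MD}(\alpha)$ holds for all ordinals $\alpha$, then the outcome of $MLS$ exists and equals the outcome of $\overline{MLS}$.
   Context: A restriction of $H$ is $G=(S_1,\dots,S_n)$ with $S_i\subseteq T_i$ (possibly empty), ordered componentwise. Mixed strategies: for each $i$ a set $\Delta T_i\supseteq T_i$ of mixed strategies is given, and for each $S_i\subseteq T_i$ a set $\Delta S_i\subseteq\Delta T_i$ of mixed strategies over $S_i$; each $p_i$ is extended to $p_i:\Delta T_1\times\dots\times\Delta T_n\to\mathbb R$. For $m_i\in\Delta T_i$ and $s_i\in T_i$, $m_i\succ_G s_i$ means $p_i(m_i,s_{-i})>p_i(s_i,s_{-i})$ for all $s_{-i}\in\prod_{j\ne i}S_j$ (vacuous if empty). $MGS(G):=(S_1',\dots,S_n')$ with $S_i':=\{s_i\in T_i\mid\neg\exists m_i\in\Delta T_i:\ m_i\succ_G s_i\}$; $MLS(G):=(S_1',\dots,S_n')$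 with $S_i':=\{s_i\in T_i\mid\neg\exists m_i\in\Delta S_i:\ m_i\succ_G s_i\}$; $\overline{T}(G):=T(G)\cap G$. Iterations: $T^0:=H$, $T^{\alpha+1}:=T(T^\alpha)$, $T^\beta:=\bigcap_{\alpha<\beta}T^\alpha$ for limit $\beta$; outcome $T^{\alpha_T}$, $\alpha_T$ the least $\alpha$ with $T^{\alpha+1}=T^\alpha$. $R$ is a relaxation of $T$ if for all ordinals $\alpha$: (1) $T(R^\alpha)\subseteq R(R^\alpha)$; (2) if $T(R^\alpha)\subseteq R^\alpha$ then $R(R^\alpha)\subseteq R^\alpha$; (3) if $R(R^\alpha)=R^\alpha$ then $T(R^\alpha)=R^\alpha$. $T$ is order independent if the set of outcomes of relaxations of $T$ has at most one element. Property $\mathbf{MD}(\alpha)$: for every relaxation $R$ of $\overline{MLS}$, writing $R^\alpha=(S_1,\dots,S_n)$, every $i$ and every $s_i\in T_i$: if some $m_i\in\Delta T_i$ has $m_i\succ_{R^\alpha}s_i$, then some $m_i^*\in\Delta S_i$ has $m_i^*\succ_{R^\alpha}s_i$. *)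

theory Defs
  imports Complex_Main
begin

text \<open>Pure and mixed strategies share the type 's.
  A restriction of H = (T_1,...,T_n) is a function G :: 'i => 's set with G i a subset of T i;
  the order is the componentwise (pointwise) order.  A payoff p i is defined on all
  profiles 'i => 's (in particular on mixed profiles).\<close>

definition dominates ::
  "('i \<Rightarrow> ('i \<Rightarrow> 's) \<Rightarrow> real) \<Rightarrow> ('i \<Rightarrow> 's set) \<Rightarrow> 'i \<Rightarrow> 's \<Rightarrow> 's \<Rightarrow> bool" where
  "dominates p G i m s \<longleftrightarrow>
     (\<forall>q. (\<forall>j. j \<noteq> i \<longrightarrow> q j \<in> G j) \<longrightarrow> p i (q(i := m)) > p i (q(i := s)))"

definition MGS ::
  "('i \<Rightarrow> ('i \<Rightarrow> 's) \<Rightarrow> real) \<Rightarrow> ('i \<Rightarrow> 's set) \<Rightarrow> ('i \<Rightarrow> 's set)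
     \<Rightarrow> ('i \<Rightarrow> 's set) \<Rightarrow> ('i \<Rightarrow> 's set)" where
  "MGS p T DT G = (\<lambda>i. {s \<in> T i. \<not> (\<exists>m \<in> DT i. dominates p G i m s)})"

definition MLS ::
  "('i \<Rightarrow> ('i \<Rightarrow> 's) \<Rightarrow> real) \<Rightarrow> ('i \<Rightarrow> 's set) \<Rightarrow> ('i \<Rightarrow> 's set \<Rightarrow> 's set)
     \<Rightarrow> ('i \<Rightarrow> 's set) \<Rightarrow> ('i \<Rightarrow> 's set)" where
  "MLS p T D G = (\<lambda>i. {s \<in> T i. \<not> (\<exists>m \<in> D i (G i). dominates p G i m s)})"

definition bar :: "('g::lattice \<Rightarrow> 'g) \<Rightarrow> 'g \<Rightarrow> 'g" where
  "bar F G = inf (F G) G"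

text \<open>Transfinite iteration indexed by a well-ordered type 'o:
  T^0 = H, T^(a+1) = T(T^a), T^b = Inf of earlier iterates for limit b.
  (Zero and limits are treated uniformly as H inter the infimum of the earlier iterates;
  all operators considered return restrictions of H, so this is the same.)\<close>
definition iter :: "('g::complete_lattice \<Rightarrow> 'g) \<Rightarrow> 'g \<Rightarrow> 'o::wellorder \<Rightarrow> 'g" where
  "iter F H = wfrec {(x, y). x < y}
     (\<lambda>f a. if (\<exists>b<a. \<forall>c<a. c \<le> b)
            then F (f (THE b. b < a \<and> (\<forall>c<a. c \<le> b)))
            else inf H (INF b\<in>{b. b < a}. f b))"

definition is_relaxation ::
  "'o::wellorder itself \<Rightarrow> ('g::complete_lattice \<Rightarrow> 'g) \<Rightarrow> ('g \<Rightarrow> 'g) \<Rightarrow> 'g \<Rightarrow> bool" where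
  "is_relaxation _ Tp R H \<longleftrightarrow>
     (\<forall>G. G \<le> H \<longrightarrow> R G \<le> H) \<and>
     (\<forall>\<alpha>::'o. Tp (iter R H \<alpha>) \<le> R (iter R H \<alpha>)
        \<and> (Tp (iter R H \<alpha>) \<le> iter R H \<alpha> \<longrightarrow> R (iter R H \<alpha>) \<le> iter R H \<alpha>)
        \<and> (R (iter R H \<alpha>) = iter R H \<alpha> \<longrightarrow> Tp (iter R H \<alpha>) = iter R H \<alpha>))"

definition is_outcome ::
  "'o::wellorder itself \<Rightarrow> ('g::complete_lattice \<Rightarrow> 'g) \<Rightarrow> 'g \<Rightarrow> 'g \<Rightarrow> bool" where
  "is_outcome _ F H X \<longleftrightarrow>
     (\<exists>\<alpha>::'o. F (iter F H \<alpha>) = iter F H \<alpha>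
        \<and> (\<forall>\<beta><\<alpha>. F (iter F H \<beta>) \<noteq> iter F H \<beta>) \<and> X = iter F H \<alpha>)"

definition order_independent ::
  "'o::wellorder itself \<Rightarrow> ('g::complete_lattice \<Rightarrow> 'g) \<Rightarrow> 'g \<Rightarrow> bool" where
  "order_independent ot F H \<longleftrightarrow>
     (\<forall>R1 R2 X1 X2. is_relaxation ot F R1 H \<and> is_relaxation ot F R2 H
        \<and> is_outcome ot R1 H X1 \<and> is_outcome ot R2 H X2 \<longrightarrow> X1 = X2)"

definition MD ::
  "('i \<Rightarrow> ('i \<Rightarrow> 's) \<Rightarrow> real) \<Rightarrow> ('i \<Rightarrow> 's set) \<Rightarrow> ('i \<Rightarrow> 's set) \<Rightarrow> ('i \<Rightarrow> 's set \<Rightarrow> 's set)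
     \<Rightarrow> 'o::wellorder \<Rightarrow> bool" where
  "MD p T DT D \<alpha> \<longleftrightarrow>
     (\<forall>R. is_relaxation TYPE('o) (bar (MLS p T D)) R T \<longrightarrow>
        (\<forall>i. \<forall>s \<in> T i. (\<exists>m \<in> DT i. dominates p (iter R T \<alpha>) i m s)
            \<longrightarrow> (\<exists>m \<in> D i (iter R T \<alpha> i). dominates p (iter R T \<alpha>) i m s)))"

end

theory Submission
  imports Defs
begin

text \<open>Under MD, at every stage of an elimination by a relaxation of MLS-bar, a strategy dominated
  by some mixed strategy is already dominated by one over the surviving strategies, so MLS and MGS
  agree there. Hence MGS-bar and MLS-bar have the same iterates, and since MGS G \<le> G along these
  iterates the intersection in MLS-bar is redundant, so MLS has the same iterates as well.
  Order independence: a fixpoint X of any relaxation satisfies X \<le> MGS X, and because MGS is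
  antitone and below MLS, X stays below every iterate of every other relaxation. Outcomes exist
  once the index type does not inject into the lattice, since a deflationary iteration without
  fixpoint is strictly decreasing.\<close>

lemma iter_wfrec:
  "iter F H (a::'o::wellorder) = (if \<exists>b<a. \<forall>c<a. c \<le> b
     then F (cut (iter F H) {(x, y). x < y} a (THE b. b < a \<and> (\<forall>c<a. c \<le> b)))
     else inf H (INF b\<in>{b. b < a}. cut (iter F H) {(x, y). x < y} a b))"
  unfolding iter_def by (subst wfrec[OF wf]) simp

lemma iter_succ:
  assumes "(b::'o::wellorder) < a" and "\<forall>c<a. c \<le> b"
  shows "iter F H a = F (iter F H b)"
proof -
  have "(THE b. b < a \<and> (\<forall>c<a. c \<le> b)) = b"
    using assms by (intro the_equality) (auto intro: order.antisym)
  with assms show ?thesis by (subst iter_wfrec) (auto simp: cut_apply)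
qed

lemma iter_limit:
  assumes "\<not> (\<exists>b<a. \<forall>c<a. c \<le> b)"
  shows "iter F H (a::'o::wellorder) = inf H (INF b\<in>{b. b < a}. iter F H b)"
proof -
  have "(INF b\<in>{b. b < a}. cut (iter F H) {(x, y). x < y} a b) = (INF b\<in>{b. b < a}. iter F H b)"
    by (intro INF_cong) (auto simp: cut_apply)
  then show ?thesis unfolding iter_wfrec[of F H a] if_not_P[OF assms] by simp
qed

lemma iter_induct [case_names succ limit]:
  fixes P :: "'o::wellorder \<Rightarrow> bool"
  assumes succ: "\<And>a b. b < a \<Longrightarrow> \<forall>c<a. c \<le> b \<Longrightarrow> (\<And>c. c < a \<Longrightarrow> P c) \<Longrightarrow> P a"
    and limit: "\<And>a. \<not> (\<exists>b<a. \<forall>c<a. c \<le> b) \<Longrightarrow> (\<And>c. c < a \<Longrightarrow> P c) \<Longrightarrow> P a"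
  shows "P a"
  by (induction a rule: less_induct) (metis succ limit)

lemma iter_le_start:
  assumes "\<And>G. G \<le> H \<Longrightarrow> F G \<le> H"
  shows "iter F H (a::'o::wellorder) \<le> H"
proof (induction a rule: iter_induct)
  case (succ a b)
  then show ?case using assms by (simp add: iter_succ)
next
  case (limit a)
  then show ?case by (simp add: iter_limit)
qed

lemma iter_antimono:
  assumes deflationary: "\<And>G. F G \<le> G" and "a \<le> b"
  shows "iter F H (b::'o::wellorder) \<le> iter F H a"
  using \<open>a \<le> b\<close>
proof (induction b rule: iter_induct)
  case (succ b c)
  show ?case
  proof (cases "a = b")
    case False
    with succ have "iter F H c \<le> iter F H a" by (meson le_less not_le)
    moreover have "iter F H b \<le> iter F H c" using succ deflationary by (simp add: iter_succ)
    ultimately show ?thesis by simp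
  qed simp
next
  case (limit b)
  show ?case
  proof (cases "a = b")
    case False
    with limit have "a < b" by simp
    then show ?thesis using limit by (simp add: iter_limit le_infI2 INF_lower)
  qed simp
qed

lemma iter_cong_on_iterates:
  assumes "\<And>b. b < a \<Longrightarrow> G (iter F H b) = F (iter F H b)"
  shows "iter G H (a::'o::wellorder) = iter F H a"
  using assms
proof (induction a rule: iter_induct)
  case (succ a b)
  then have "iter G H b = iter F H b" by auto
  with succ show ?case by (simp add: iter_succ)
next
  case (limit a)
  then have "(INF b\<in>{b. b < a}. iter G H b) = (INF b\<in>{b. b < a}. iter F H b)"
    by (intro INF_cong) auto
  with limit show ?case by (simp add: iter_limit)
qed

lemma is_outcome_cong_on_iterates:
  assumes "\<And>b::'o::wellorder. G (iter F H b) = F (iter F H b)"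
  shows "is_outcome TYPE('o) G H X \<longleftrightarrow> is_outcome TYPE('o) F H X"
proof -
  have "iter G H = (iter F H :: 'o \<Rightarrow> _)"
    using assms by (intro ext iter_cong_on_iterates)
  then show ?thesis unfolding is_outcome_def by (simp add: assms)
qed

lemma iter_repeat_imp_fixpoint:
  assumes deflationary: "\<And>G. F G \<le> G" and "a < b" and "iter F H b = iter F H (a::'o::wellorder)"
  shows "F (iter F H a) = iter F H a"
proof -
  define s where "s = (LEAST z. a < z)"
  have "a < s" unfolding s_def using \<open>a < b\<close> by (rule LeastI)
  moreover have "\<forall>c<s. c \<le> a" unfolding s_def by (metis not_less_Least not_le)
  ultimately have "iter F H s = F (iter F H a)" by (rule iter_succ)
  moreover have "s \<le> b" unfolding s_def using \<open>a < b\<close> by (rule Least_le)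
  then have "iter F H b \<le> iter F H s" by (rule iter_antimono[OF deflationary])
  ultimately show ?thesis using assms by (metis order.antisym)
qed

lemma outcome_exists_if_no_injection:
  assumes deflationary: "\<And>G. F G \<le> G" and no_inj: "\<nexists>f::'o \<Rightarrow> 'g. inj f"
  shows "\<exists>X. is_outcome TYPE('o::wellorder) F (H::'g::complete_lattice) X"
proof -
  have "\<exists>a::'o. F (iter F H a) = iter F H a"
  proof (rule ccontr)
    assume no_fixpoint: "\<not> ?thesis"
    have "inj (iter F H :: 'o \<Rightarrow> 'g)"
    proof (rule injI, rule ccontr)
      fix x y :: 'o
      assume "iter F H x = iter F H y" "x \<noteq> y"
      then show False
        using iter_repeat_imp_fixpoint[OF deflationary] no_fixpoint
        by (metis linorder_neqE)
    qed
    with no_inj show False by blast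
  qed
  then obtain a0 :: 'o where "F (iter F H a0) = iter F H a0" ..
  define a where "a = (LEAST a::'o. F (iter F H a) = iter F H a)"
  have "F (iter F H a) = iter F H a" unfolding a_def by (rule LeastI) fact
  moreover have "\<forall>\<beta><a. F (iter F H \<beta>) \<noteq> iter F H \<beta>"
    unfolding a_def using not_less_Least by blast
  ultimately show ?thesis unfolding is_outcome_def by blast
qed

lemma is_relaxation_iter_le:
  "is_relaxation TYPE('o::wellorder) Tp R H \<Longrightarrow> iter R H (a::'o) \<le> H"
  unfolding is_relaxation_def by (rule iter_le_start) blast

lemma is_relaxation_bar_self: "is_relaxation TYPE('o::wellorder) (bar F) (bar F) H"
  unfolding is_relaxation_def bar_def by (auto intro: le_infI2)

lemma bar_deflationary: "bar F G \<le> G"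
  by (simp add: bar_def)

lemma dominates_antimono: "G' \<le> G \<Longrightarrow> dominates p G i m s \<Longrightarrow> dominates p G' i m s"
  unfolding dominates_def le_fun_def by blast

lemma MGS_antimono: "G' \<le> G \<Longrightarrow> MGS p T DT G' \<le> MGS p T DT G"
  unfolding MGS_def le_fun_def using dominates_antimono[of G' G p] by (auto simp: le_fun_def)

lemma MGS_le_MLS:
  assumes "\<forall>i S. S \<subseteq> T i \<longrightarrow> D i S \<subseteq> DT i" and "G \<le> T"
  shows "MGS p T DT G \<le> MLS p T D G"
  using assms unfolding MGS_def MLS_def le_fun_def by blast

lemma MLS_eq_MGS_at_relaxation_iterate:
  assumes "\<forall>i S. S \<subseteq> T i \<longrightarrow> D i S \<subseteq> DT i"
    and R: "is_relaxation TYPE('o) (bar (MLS p T D)) R T"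
    and "MD p T DT D (b::'o::wellorder)"
  shows "MLS p T D (iter R T b) = MGS p T DT (iter R T b)"
proof (rule order.antisym)
  have "\<forall>i. \<forall>s \<in> T i. (\<exists>m \<in> DT i. dominates p (iter R T b) i m s)
            \<longrightarrow> (\<exists>m \<in> D i (iter R T b i). dominates p (iter R T b) i m s)"
    using assms(3) R unfolding MD_def by blast
  then show "MLS p T D (iter R T b) \<le> MGS p T DT (iter R T b)"
    unfolding MLS_def MGS_def le_fun_def by blast
  show "MGS p T DT (iter R T b) \<le> MLS p T D (iter R T b)"
    using assms(1) is_relaxation_iter_le[OF R] by (rule MGS_le_MLS)
qed

lemma iter_bar_le_start: "iter (bar F) H (a::'o::wellorder) \<le> H"
  by (rule iter_le_start) (use bar_deflationary order_trans in blast)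

lemma MGS_iter_bar_MLS_le:
  assumes "\<forall>i S. S \<subseteq> T i \<longrightarrow> D i S \<subseteq> DT i"
  shows "MGS p T DT (iter (bar (MLS p T D)) T a) \<le> iter (bar (MLS p T D)) T (a::'o::wellorder)"
proof (induction a rule: iter_induct)
  let ?X = "iter (bar (MLS p T D)) T"
  case (succ a b)
  then have X_succ: "?X a = inf (MLS p T D (?X b)) (?X b)"
    by (simp add: iter_succ bar_def)
  then have "MGS p T DT (?X a) \<le> MGS p T DT (?X b)"
    by (intro MGS_antimono) simp
  moreover have "MGS p T DT (?X b) \<le> ?X b"
    using succ by blast
  moreover have "MGS p T DT (?X b) \<le> MLS p T D (?X b)"
    using assms iter_bar_le_start by (rule MGS_le_MLS)
  ultimately show ?case unfolding X_succ by (meson le_inf_iff order_trans)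
next
  let ?X = "iter (bar (MLS p T D)) T"
  case (limit a)
  have X_limit: "?X a = inf T (INF b\<in>{b. b < a}. ?X b)"
    using limit(1) by (rule iter_limit)
  have "MGS p T DT (?X a) \<le> ?X b" if "b < a" for b
  proof -
    have "?X a \<le> ?X b" using that by (intro iter_antimono bar_deflationary) simp
    then have "MGS p T DT (?X a) \<le> MGS p T DT (?X b)" by (rule MGS_antimono)
    with limit that show ?thesis by (blast intro: order_trans)
  qed
  moreover have "MGS p T DT (?X a) \<le> T"
    unfolding MGS_def le_fun_def by blast
  ultimately have "MGS p T DT (?X a) \<le> inf T (INF b\<in>{b. b < a}. ?X b)"
    by (auto intro: INF_greatest)
  then show ?case by (simp only: X_limit)
qed

lemma bar_MLS_eq_MLS_at_iterate:
  assumes "\<forall>i S. S \<subseteq> T i \<longrightarrow> D i S \<subseteq> DT i" and "MD p T DT D (b::'o::wellorder)"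
  shows "bar (MLS p T D) (iter (bar (MLS p T D)) T b) = MLS p T D (iter (bar (MLS p T D)) T b)"
proof -
  have "MLS p T D (iter (bar (MLS p T D)) T b) = MGS p T DT (iter (bar (MLS p T D)) T b)"
    using assms(1) is_relaxation_bar_self assms(2) by (rule MLS_eq_MGS_at_relaxation_iterate)
  also have "\<dots> \<le> iter (bar (MLS p T D)) T b"
    using assms(1) by (rule MGS_iter_bar_MLS_le)
  finally show ?thesis unfolding bar_def by (rule inf_absorb1)
qed

lemma bar_MGS_eq_bar_MLS_at_iterate:
  assumes "\<forall>i S. S \<subseteq> T i \<longrightarrow> D i S \<subseteq> DT i" and "MD p T DT D (b::'o::wellorder)"
  shows "bar (MGS p T DT) (iter (bar (MLS p T D)) T b) = bar (MLS p T D) (iter (bar (MLS p T D)) T b)"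
  unfolding bar_def[of _ "iter (bar (MLS p T D)) T b"]
  using MLS_eq_MGS_at_relaxation_iterate[OF assms(1) is_relaxation_bar_self assms(2)] by simp

lemma fixpoint_of_relaxation_le_iter:
  assumes D_le_DT: "\<forall>i S. S \<subseteq> T i \<longrightarrow> D i S \<subseteq> DT i"
    and R: "is_relaxation TYPE('o::wellorder) (bar (MLS p T D)) R T"
    and R': "is_relaxation TYPE('o) (bar (MLS p T D)) R' T"
    and fixpoint: "R' (iter R' T b) = iter R' T (b::'o)"
    and "MD p T DT D b"
  shows "iter R' T b \<le> iter R T (a::'o)"
proof -
  let ?X = "iter R' T b"
  have "bar (MLS p T D) ?X = ?X" using R' fixpoint unfolding is_relaxation_def by blast
  then have "?X \<le> MLS p T D ?X" unfolding bar_def by (metis inf_le1)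
  then have X_le_MGS: "?X \<le> MGS p T DT ?X"
    using MLS_eq_MGS_at_relaxation_iterate[OF D_le_DT R' \<open>MD p T DT D b\<close>] by simp
  show ?thesis
  proof (induction a rule: iter_induct)
    case (succ a c)
    then have IH: "?X \<le> iter R T c" by blast
    have "?X \<le> MGS p T DT (iter R T c)"
      using X_le_MGS MGS_antimono[OF IH] by (rule order_trans)
    also have "\<dots> \<le> MLS p T D (iter R T c)"
      using D_le_DT is_relaxation_iter_le[OF R] by (rule MGS_le_MLS)
    finally have "?X \<le> bar (MLS p T D) (iter R T c)" unfolding bar_def using IH by simp
    also have "\<dots> \<le> R (iter R T c)" using R unfolding is_relaxation_def by blast
    also have "\<dots> = iter R T a" using succ by (simp add: iter_succ)
    finally show ?case .
  next
    case (limit a)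
    have "?X \<le> inf T (INF c\<in>{c. c < a}. iter R T c)"
      using is_relaxation_iter_le[OF R'] limit by (auto intro: INF_greatest)
    then show ?case by (simp only: iter_limit[OF limit(1)])
  qed
qed

lemma order_independent_bar_MLS:
  assumes "\<forall>i S. S \<subseteq> T i \<longrightarrow> D i S \<subseteq> DT i" and "\<forall>\<alpha>::'o::wellorder. MD p T DT D \<alpha>"
  shows "order_independent TYPE('o) (bar (MLS p T D)) T"
  unfolding order_independent_def
proof (intro allI impI, elim conjE)
  fix R R' X X'
  assume R: "is_relaxation TYPE('o) (bar (MLS p T D)) R T"
    and R': "is_relaxation TYPE('o) (bar (MLS p T D)) R' T"
    and "is_outcome TYPE('o) R T X" "is_outcome TYPE('o) R' T X'"
  then obtain a a' :: 'o
    where "R (iter R T a) = iter R T a" "X = iter R T a"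
      and "R' (iter R' T a') = iter R' T a'" "X' = iter R' T a'"
    unfolding is_outcome_def by blast
  with assms R R' show "X = X'"
    by (metis fixpoint_of_relaxation_le_iter order.antisym)
qed

theorem mainTheorem12:
  fixes T :: "'i::finite \<Rightarrow> 's set"
    and DT :: "'i \<Rightarrow> 's set"
    and D :: "'i \<Rightarrow> 's set \<Rightarrow> 's set"
    and p :: "'i \<Rightarrow> ('i \<Rightarrow> 's) \<Rightarrow> real"
  assumes "\<forall>i. T i \<subseteq> DT i"
    and "\<forall>i S. S \<subseteq> T i \<longrightarrow> D i S \<subseteq> DT i"
    and "\<forall>i. D i (T i) = DT i"
  shows
    "(\<forall>\<alpha>::'o::wellorder. (\<forall>\<beta><\<alpha>. MD p T DT D \<beta>) \<longrightarrow>
        iter (bar (MGS p T DT)) T \<alpha> = iter (bar (MLS p T D)) T \<alpha>)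
     \<and> ((\<forall>\<alpha>::'o. MD p T DT D \<alpha>) \<longrightarrow>
        (\<forall>X. is_outcome TYPE('o) (bar (MGS p T DT)) T X
              \<longleftrightarrow> is_outcome TYPE('o) (bar (MLS p T D)) T X))
     \<and> ((\<forall>\<alpha>::'o. MD p T DT D \<alpha>) \<longrightarrow> order_independent TYPE('o) (bar (MLS p T D)) T)
     \<and> (\<forall>\<alpha>::'o. (\<forall>\<beta>\<le>\<alpha>. MD p T DT D \<beta>) \<longrightarrow>
        iter (MLS p T D) T \<alpha> = iter (bar (MLS p T D)) T \<alpha>)
     \<and> ((\<forall>\<alpha>::'o. MD p T DT D \<alpha>) \<longrightarrow>
        (\<forall>X. is_outcome TYPE('o) (MLS p T D) T X
              \<longleftrightarrow> is_outcome TYPE('o) (bar (MLS p T D)) T X)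
        \<and> ((\<nexists>f::'o \<Rightarrow> ('i \<Rightarrow> 's set). inj f) \<longrightarrow> (\<exists>X. is_outcome TYPE('o) (MLS p T D) T X)))"
proof -
  note MGS_eq = bar_MGS_eq_bar_MLS_at_iterate[OF assms(2)]
  note MLS_eq = bar_MLS_eq_MLS_at_iterate[OF assms(2), symmetric]
  have iter_MGS: "iter (bar (MGS p T DT)) T \<alpha> = iter (bar (MLS p T D)) T \<alpha>"
    if "\<forall>\<beta><\<alpha>. MD p T DT D \<beta>" for \<alpha> :: 'o
    using that by (intro iter_cong_on_iterates MGS_eq) auto
  have iter_MLS: "iter (MLS p T D) T \<alpha> = iter (bar (MLS p T D)) T \<alpha>"
    if "\<forall>\<beta><\<alpha>. MD p T DT D \<beta>" for \<alpha> :: 'o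
    using that by (intro iter_cong_on_iterates MLS_eq) auto
  have outcome_MGS: "is_outcome TYPE('o) (bar (MGS p T DT)) T X
      \<longleftrightarrow> is_outcome TYPE('o) (bar (MLS p T D)) T X" if "\<forall>\<alpha>::'o. MD p T DT D \<alpha>" for X
    using that by (intro is_outcome_cong_on_iterates MGS_eq) auto
  have outcome_MLS: "is_outcome TYPE('o) (MLS p T D) T X
      \<longleftrightarrow> is_outcome TYPE('o) (bar (MLS p T D)) T X" if "\<forall>\<alpha>::'o. MD p T DT D \<alpha>" for X
    using that by (intro is_outcome_cong_on_iterates MLS_eq) auto
  have "\<exists>X. is_outcome TYPE('o) (bar (MLS p T D)) T X" if "\<nexists>f::'o \<Rightarrow> ('i \<Rightarrow> 's set). inj f"
    using outcome_exists_if_no_injection[of "bar (MLS p T D)", OF bar_deflationary that] .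
  with iter_MGS iter_MLS outcome_MGS outcome_MLS order_independent_bar_MLS[OF assms(2)]
  show ?thesis by auto
qed

end
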